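(* Let $p\ge2$ and let $x=x_{i_1}^{r_1}x_{i_2}^{r_2}\cdots x_{i_n}^{r_n}$ ($n\ge1$, $i_1<\dots<i_n$, $r_k\ge1$) be a positive word in normal form in $F(p)$. Then $$N_2(x)=\max\{\,i_k+(p-1)(r_k+r_{k+1}+\dots+r_n)+1 : k=1,\dots,n\,\}$$ equals the $y$-coordinate of the last breakpoint of the graph of $x$ regarded as a homeomorphism of $\mathbb{R}$, and, with $D(x)=r_1+\dots+r_n+i_n$, $$\frac{D(x)}{2}\le N_2(x)\le D(x)(p-1)+1.$$
   Context: For $p\ge2$, $F(p)$ is the group of piecewise-linear orientation-preserving homeomorphisms of $[0,1]$ with breakpoints in $\mathbb{Z}[1/p]$ and slopes integer powers of $p$, with presentation $\langle x_0,x_1,\dots\mid x_i^{-1}x_jx_i=x_{j+p-1}\ (i<j)\rangle$; products are compositions on the right ($xy$ means first $x$, then $y$). Every element has a unique normal form $x_{i_1}^{r_1}\cdots x_{i_n}^{r_n}x_{j_m}^{-s_m}\cdots x_{j_1}^{-s_1}$ ($i_1<\dots<i_n$, $j_1<\dots<j_m$, positive exponents, and if both $x_i$ and $x_i^{-1}$ occur then one of $x_{i+1}^{\pm1},\dots,x_{i+p-1}^{\pm1}$ occurs). Realization on $\mathbb{R}$: the assignment $x_i\mapsto f_i$, where $f_i(t)=t$ for $t\le i$, $f_i(t)=pt+i(1-p)$ for $i\le t\le i+1$, $f_i(t)=t+p-1$ for $t\ge i+1$, extends to an isomorphism of $F(p)$ onto a group of piecewise-linear homeomorphisms of $\mathbb{R}$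 (with composition on the right); the graph of $x$ refers to the graph of this homeomorphism of $\mathbb{R}$. *)

theory Defs
  imports Complex_Main
begin

definition gen_fun :: "nat \<Rightarrow> nat \<Rightarrow> real \<Rightarrow> real" where
  "gen_fun p i t =
     (if t \<le> real i then t
      else if t \<le> real i + 1 then real p * t + real i * (1 - real p)
      else t + real p - 1)"

text \<open>The homeomorphism of the positive word x_{i 1}^{r 1} ... x_{i m}^{r m}
  (indices 1..m); products compose on the right, so x_{i 1}^{r 1} acts first.\<close>
fun word_fun :: "nat \<Rightarrow> (nat \<Rightarrow> nat) \<Rightarrow> (nat \<Rightarrow> nat) \<Rightarrow> nat \<Rightarrow> real \<Rightarrow> real" where
  "word_fun p i r 0 = id"
| "word_fun p i r (Suc m) = (gen_fun p (i (Suc m)) ^^ r (Suc m)) \<circ> word_fun p i r m"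

definition breakpoint :: "(real \<Rightarrow> real) \<Rightarrow> real \<Rightarrow> bool" where
  "breakpoint g t \<longleftrightarrow>
     \<not> (\<exists>e>0. \<exists>a b. \<forall>s. \<bar>s - t\<bar> < e \<longrightarrow> g s = a * s + b)"

definition N2 :: "nat \<Rightarrow> (nat \<Rightarrow> nat) \<Rightarrow> (nat \<Rightarrow> nat) \<Rightarrow> nat \<Rightarrow> nat" where
  "N2 p i r n = Max ((\<lambda>k. i k + (p - 1) * (\<Sum>j=k..n. r j) + 1) ` {1..n})"

definition Dx :: "(nat \<Rightarrow> nat) \<Rightarrow> (nat \<Rightarrow> nat) \<Rightarrow> nat \<Rightarrow> nat" where
  "Dx i r n = (\<Sum>k=1..n. r k) + i n"

end

theory Submission
  imports Defs
begin

text \<open>Each generator x_i lies below the translation by p - 1 and agrees with it exactly on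
  [i + 1, \<infinity>). Call f a shift by c beyond a if f v \<le> v + c everywhere, with equality exactly
  for v \<ge> a. Composition preserves this (amounts add, thresholds combine by a maximum), so
  the word x is a shift by c = (p - 1)(r_1 + ... + r_n) beyond a threshold t whose recursion
  is exactly that of N_2(x) - c. Right of t the graph of x is the line of slope 1 through
  (t, N_2(x)); left of t it lies strictly below that line, so t is the last breakpoint.\<close>

definition shift_beyond :: "(real \<Rightarrow> real) \<Rightarrow> real \<Rightarrow> real \<Rightarrow> bool" where
  "shift_beyond f c a \<longleftrightarrow> (\<forall>v. f v \<le> v + c \<and> (f v = v + c \<longleftrightarrow> a \<le> v))"

lemma shift_beyond_eq: "shift_beyond g c a \<Longrightarrow> a \<le> v \<Longrightarrow> g v = v + c"
  unfolding shift_beyond_def by blast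

lemma shift_beyond_less: "shift_beyond g c a \<Longrightarrow> v < a \<Longrightarrow> g v < v + c"
  unfolding shift_beyond_def by (metis less_le not_le)

lemma shift_beyond_comp:
  assumes "shift_beyond h c a" and "shift_beyond g d b"
  shows "shift_beyond (g \<circ> h) (c + d) (max a (b - c))"
  unfolding shift_beyond_def
proof (intro allI conjI)
  fix v
  have h: "h v \<le> v + c" "h v = v + c \<longleftrightarrow> a \<le> v"
   and g: "g (h v) \<le> h v + d" "g (h v) = h v + d \<longleftrightarrow> b \<le> h v"
    using assms unfolding shift_beyond_def by blast+
  show "(g \<circ> h) v \<le> v + (c + d)" using h g by simp
  show "(g \<circ> h) v = v + (c + d) \<longleftrightarrow> max a (b - c) \<le> v" using h g by auto
qed

lemma shift_beyond_funpow:
  assumes f: "shift_beyond f c a" and "0 \<le> c" and "1 \<le> j"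
  shows "shift_beyond (f ^^ j) (real j * c) a"
  using \<open>1 \<le> j\<close>
proof (induction j rule: nat_induct_at_least)
  case base
  then show ?case using f by simp
next
  case (Suc j)
  have "shift_beyond (f ^^ Suc j) (real j * c + c) (max a (a - real j * c))"
    using shift_beyond_comp[OF Suc.IH f] by (simp only: funpow.simps(2))
  moreover have "max a (a - real j * c) = a" using \<open>0 \<le> c\<close> by simp
  ultimately show ?case by (simp add: algebra_simps del: funpow.simps)
qed

lemma shift_beyond_breakpoint:
  assumes g: "shift_beyond g c a"
  shows "breakpoint g a"
  unfolding breakpoint_def
proof
  assume "\<exists>e>0. \<exists>m b. \<forall>s. \<bar>s - a\<bar> < e \<longrightarrow> g s = m * s + b"
  then obtain e m b where e: "e > 0" and affine: "\<And>s. \<bar>s - a\<bar> < e \<Longrightarrow> g s = m * s + b"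
    by blast
  have "m * a + b = a + c" and "m * (a + e/2) + b = a + e/2 + c"
    using affine[of a] affine[of "a + e/2"] shift_beyond_eq[OF g] e by auto
  moreover have "m * (a + e/2) = m * a + m * (e/2)" by (simp add: distrib_left)
  ultimately have "m * (e/2) = 1 * (e/2)" by linarith
  then have "m = 1" using e by simp
  then have "g (a - e/2) = a - e/2 + c"
    using affine[of "a - e/2"] \<open>m * a + b = a + c\<close> e by simp
  then show False using shift_beyond_less[OF g, of "a - e/2"] e by simp
qed

lemma shift_beyond_no_breakpoint_above:
  assumes g: "shift_beyond g c a" and "a < s"
  shows "\<not> breakpoint g s"
proof -
  have "\<forall>u. \<bar>u - s\<bar> < s - a \<longrightarrow> g u = 1 * u + c"
    using shift_beyond_eq[OF g] by auto
  moreover have "s - a > 0" using \<open>a < s\<close> by simp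
  ultimately show ?thesis unfolding breakpoint_def by blast
qed

lemma shift_beyond_gen_fun:
  assumes "p \<ge> 2"
  shows "shift_beyond (gen_fun p i) (real p - 1) (real i + 1)"
  unfolding shift_beyond_def
proof (intro allI)
  fix v
  have "real p * v + real i * (1 - real p) = v + real p - 1 + (real p - 1) * (v - real i - 1)"
    by (simp add: algebra_simps)
  moreover have "(real p - 1) * (v - real i - 1) < 0" if "v < real i + 1"
    using assms that by (intro mult_pos_neg) auto
  moreover have "(real p - 1) * (v - real i - 1) \<le> 0" if "v \<le> real i + 1"
    using assms that by (intro mult_nonneg_nonpos) auto
  ultimately show "gen_fun p i v \<le> v + (real p - 1) \<and>
      (gen_fun p i v = v + (real p - 1) \<longleftrightarrow> real i + 1 \<le> v)"
    using assms unfolding gen_fun_def by auto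
qed

lemma N2_Suc:
  assumes "m \<ge> 1"
  shows "N2 p i r (Suc m) =
    max (i (Suc m) + (p - 1) * r (Suc m) + 1) (N2 p i r m + (p - 1) * r (Suc m))"
proof -
  let ?f = "\<lambda>k. i k + (p - 1) * (\<Sum>j=k..m. r j) + 1"
  let ?g = "\<lambda>k. i k + (p - 1) * (\<Sum>j=k..Suc m. r j) + 1"
  have "?g ` {1..m} = (\<lambda>y. y + (p - 1) * r (Suc m)) ` (?f ` {1..m})"
    by (force simp: image_image algebra_simps)
  then have "Max (?g ` {1..m}) = Max (?f ` {1..m}) + (p - 1) * r (Suc m)"
    using mono_Max_commute[of "\<lambda>y. y + (p - 1) * r (Suc m)" "?f ` {1..m}"] assms
    by (simp add: mono_def)
  moreover have "{1..Suc m} = insert (Suc m) {1..m}" by auto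
  ultimately show ?thesis unfolding N2_def using assms by (simp add: Max_insert)
qed

lemma shift_beyond_word_fun:
  assumes p: "p \<ge> 2" and "m \<ge> 1" and r: "\<And>k. 1 \<le> k \<Longrightarrow> k \<le> m \<Longrightarrow> r k \<ge> 1"
  shows "shift_beyond (word_fun p i r m) ((real p - 1) * real (\<Sum>k=1..m. r k))
           (real (N2 p i r m) - (real p - 1) * real (\<Sum>k=1..m. r k))"
  using \<open>m \<ge> 1\<close> r
proof (induction m rule: nat_induct_at_least)
  case base
  have "real (N2 p i r 1) = real (i 1) + (real p - 1) * real (r 1) + 1"
    using p by (simp add: N2_def of_nat_diff)
  moreover have "shift_beyond (gen_fun p (i 1) ^^ r 1) ((real p - 1) * real (r 1)) (real (i 1) + 1)"
    using shift_beyond_funpow[OF shift_beyond_gen_fun[OF p], of "r 1"] p base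
    by (simp add: mult.commute)
  ultimately show ?case by simp
next
  case (Suc m)
  let ?c = "(real p - 1) * real (\<Sum>k=1..m. r k)"
  have "shift_beyond (gen_fun p (i (Suc m)) ^^ r (Suc m))
          ((real p - 1) * real (r (Suc m))) (real (i (Suc m)) + 1)"
    using shift_beyond_funpow[OF shift_beyond_gen_fun[OF p], of "r (Suc m)"] p Suc.prems
    by (simp add: mult.commute)
  from shift_beyond_comp[OF Suc.IH this] Suc.prems
  have "shift_beyond (word_fun p i r (Suc m)) (?c + (real p - 1) * real (r (Suc m)))
          (max (real (N2 p i r m) - ?c) (real (i (Suc m)) + 1 - ?c))"
    by simp
  moreover have "real (N2 p i r (Suc m)) =
      max (real (i (Suc m)) + (real p - 1) * real (r (Suc m)) + 1)
          (real (N2 p i r m) + (real p - 1) * real (r (Suc m)))"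
    unfolding N2_Suc[OF Suc.hyps] using p by (simp add: of_nat_max of_nat_diff)
  moreover have "(real p - 1) * real (\<Sum>k=1..Suc m. r k) = ?c + (real p - 1) * real (r (Suc m))"
    by (simp add: algebra_simps)
  ultimately show ?case by (simp only: max_diff_distrib_left) argo
qed

lemma Dx_le_twice_N2:
  assumes "p \<ge> 2" and "n \<ge> 1"
  shows "Dx i r n \<le> 2 * N2 p i r n"
proof -
  let ?f = "\<lambda>k. i k + (p - 1) * (\<Sum>j=k..n. r j) + 1"
  have le_N2: "?f k \<le> N2 p i r n" if "k \<in> {1..n}" for k
    unfolding N2_def using that by (intro Max_ge) auto
  have "?f 1 \<le> N2 p i r n" and "?f n \<le> N2 p i r n"
    using le_N2[of 1] le_N2[of n] assms(2) by simp_all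
  moreover have "(\<Sum>k=1..n. r k) \<le> (p - 1) * (\<Sum>k=1..n. r k)" using assms(1) by simp arith
  ultimately show ?thesis unfolding Dx_def by linarith
qed

lemma le_last_if_strict_mono_on:
  assumes "\<And>k. m \<le> k \<Longrightarrow> k < n \<Longrightarrow> f k < f (Suc k)" and "m \<le> k" and "k \<le> n"
  shows "f k \<le> (f n :: nat)"
  using \<open>k \<le> n\<close>
proof (induction n rule: dec_induct)
  case (step l)
  then show ?case using assms(1)[of l] \<open>m \<le> k\<close> by simp
qed simp

lemma N2_le_Dx:
  assumes "p \<ge> 2" and "n \<ge> 1" and i: "\<And>k. 1 \<le> k \<Longrightarrow> k < n \<Longrightarrow> i k < i (Suc k)"
  shows "N2 p i r n \<le> Dx i r n * (p - 1) + 1"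
  unfolding N2_def
proof (rule Max.boundedI)
  fix y assume "y \<in> (\<lambda>k. i k + (p - 1) * (\<Sum>j=k..n. r j) + 1) ` {1..n}"
  then obtain k where k: "1 \<le> k" "k \<le> n" and y: "y = i k + (p - 1) * (\<Sum>j=k..n. r j) + 1"
    by auto
  have "i k \<le> i n" using le_last_if_strict_mono_on[of 1 n i k] i k by blast
  also have "i n \<le> i n * (p - 1)" using assms(1) by simp arith
  finally have "i k \<le> i n * (p - 1)" .
  moreover have "(p - 1) * (\<Sum>j=k..n. r j) \<le> (p - 1) * (\<Sum>j=1..n. r j)"
    using k by (intro mult_le_mono2 sum_mono2) auto
  ultimately have "y \<le> i n * (p - 1) + (p - 1) * (\<Sum>j=1..n. r j) + 1"
    unfolding y by linarith
  also have "\<dots> = Dx i r n * (p - 1) + 1" unfolding Dx_def by (simp add: algebra_simps)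
  finally show "y \<le> Dx i r n * (p - 1) + 1" .
qed (use assms(2) in auto)

theorem proposition5:
  fixes p n :: nat and i r :: "nat \<Rightarrow> nat"
  assumes "p \<ge> 2" and "n \<ge> 1"
    and "\<And>k. 1 \<le> k \<Longrightarrow> k < n \<Longrightarrow> i k < i (Suc k)"
    and "\<And>k. 1 \<le> k \<Longrightarrow> k \<le> n \<Longrightarrow> r k \<ge> 1"
  shows "(\<exists>t. breakpoint (word_fun p i r n) t
              \<and> (\<forall>s. breakpoint (word_fun p i r n) s \<longrightarrow> s \<le> t)
              \<and> word_fun p i r n t = real (N2 p i r n))
         \<and> real (Dx i r n) / 2 \<le> real (N2 p i r n)
         \<and> N2 p i r n \<le> Dx i r n * (p - 1) + 1"
proof -
  let ?c = "(real p - 1) * real (\<Sum>k=1..n. r k)"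
  let ?t = "real (N2 p i r n) - ?c"
  have shift: "shift_beyond (word_fun p i r n) ?c ?t"
    using shift_beyond_word_fun assms(1,2,4) .
  have "word_fun p i r n ?t = real (N2 p i r n)"
    using shift_beyond_eq[OF shift] by simp
  moreover have "\<forall>s. breakpoint (word_fun p i r n) s \<longrightarrow> s \<le> ?t"
    using shift_beyond_no_breakpoint_above[OF shift] by (meson not_le)
  moreover have "real (Dx i r n) / 2 \<le> real (N2 p i r n)"
    using Dx_le_twice_N2[OF assms(1,2), of i r] by linarith
  ultimately show ?thesis
    using shift_beyond_breakpoint[OF shift] N2_le_Dx[of p n i r] assms(1-3) by blast
qed

end
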